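(* Let $G=(V,E,w)$ be a graph with positive edge weights, let $e\in E$, and let $L^{\mathrm{down}}=\widetilde\partial^{T}\widetilde\partial$ be the down Laplacian of $G$. Then $$ w_e\, B_e^{2} = \big((L^{\mathrm{down}})^{+}\big)_{ee} = \big\|1_e^{T}\widetilde\partial^{+}\big\|^{2}, $$ where $1_e^{T}\widetilde\partial^{+}$ is the row of $\widetilde\partial^{+}$ corresponding to $e$.
   Context: $G=(V,E,w)$ is an undirected graph with $n=|V|$ vertices, $m=|E|$ edges and positive weights $w_e$. Each edge $e=\{s,t\}$ is given an arbitrary fixed orientation $(s,t)$. The boundary (signed incidence) matrix $\partial\in\mathbb{R}^{n\times m}$ has column $\partial 1_e=1_s-1_t$ for $e=(s,t)$, where $1_x$ denotes the indicator vector of a vertex or edge $x$. $W\in\mathbb{R}^{m\times m}$ is the diagonal matrix of edge weights, $\widetilde\partial=\partial W^{1/2}$, and the graph Laplacian is $L=\partial W\partial^{T}=\widetilde\partial\widetilde\partial^{T}$ (equivalently $D-A$ with $D$ the weighted degree matrix and $A$ the weighted adjacency matrix). $M^{+}$ denotes the Moore–Penrose pseudoinverse, and $L^{2+}=(L^{+})^2$. The down Laplacian is $L^{\mathrm{down}}=\widetilde\partial^{T}\widetilde\partial=W^{1/2}\partial^{T}\partial W^{1/2}\in\mathbb{R}^{m\times m}$. The biharmonic distance between vertices $s,t$ is $B_{st}=\sqrt{(1_s-1_t)^{T}L^{2+}(1_s-1_t)}$, and for an edge $e=\{s,t\}$, $B_e:=B_{st}$. *)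

theory Defs
  imports "HOL-Analysis.Analysis"
begin

definition pinv :: "real^'n^'m \<Rightarrow> real^'m^'n" where
  "pinv A = (THE X. A ** X ** A = A \<and> X ** A ** X = X \<and>
                    transpose (A ** X) = A ** X \<and> transpose (X ** A) = X ** A)"

definition ind :: "'a::finite \<Rightarrow> real^'a" where
  "ind x = axis x 1"

definition boundary :: "('e::finite \<Rightarrow> 'v::finite) \<Rightarrow> ('e \<Rightarrow> 'v) \<Rightarrow> real^'e^'v" where
  "boundary src tgt = (\<chi> v e. (if v = src e then 1 else 0) - (if v = tgt e then 1 else 0))"

definition wdiag_sqrt :: "('e::finite \<Rightarrow> real) \<Rightarrow> real^'e^'e" where
  "wdiag_sqrt w = (\<chi> i j. if i = j then sqrt (w i) else 0)"

definition dtilde :: "('e::finite \<Rightarrow> 'v::finite) \<Rightarrow> ('e \<Rightarrow> 'v) \<Rightarrow> ('e \<Rightarrow> real) \<Rightarrow> real^'e^'v" where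
  "dtilde src tgt w = boundary src tgt ** wdiag_sqrt w"

definition laplacian :: "('e::finite \<Rightarrow> 'v::finite) \<Rightarrow> ('e \<Rightarrow> 'v) \<Rightarrow> ('e \<Rightarrow> real) \<Rightarrow> real^'v^'v" where
  "laplacian src tgt w = dtilde src tgt w ** transpose (dtilde src tgt w)"

definition down_laplacian :: "('e::finite \<Rightarrow> 'v::finite) \<Rightarrow> ('e \<Rightarrow> 'v) \<Rightarrow> ('e \<Rightarrow> real) \<Rightarrow> real^'e^'e" where
  "down_laplacian src tgt w = transpose (dtilde src tgt w) ** dtilde src tgt w"

definition biharmonic :: "('e::finite \<Rightarrow> 'v) \<Rightarrow> ('e \<Rightarrow> 'v) \<Rightarrow> ('e \<Rightarrow> real) \<Rightarrow> 'v::finite \<Rightarrow> 'v \<Rightarrow> real" where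
  "biharmonic src tgt w s t =
     (let Lp = pinv (laplacian src tgt w); d = ind s - ind t in sqrt (d \<bullet> ((Lp ** Lp) *v d)))"

end

(* Write D for the weighted boundary matrix and P = D^+. The Penrose equations give
   (D^T D)^+ = P P^T and (D D^T)^+ = P^T P, and from these D^T (L^+)^2 D = (L^down)^+.
   Evaluating this quadratic form at 1_e, where D 1_e = sqrt(w_e) (1_s - 1_t), yields
   w_e B_e^2 = ((L^down)^+)_ee, while the diagonal of P P^T consists of the squared row norms
   of P. The pseudoinverse exists (so the definite description in pinv denotes it) because
   A^+ can be assembled from the orthogonal projections onto the column and row spaces of A. *)

theory Submission
  imports Defs
begin

lemma orthogonal_projection_exists:
  fixes S :: "'a::euclidean_space set"
  assumes "subspace S"
  obtains p where "linear p" "\<And>x. p x \<in> S" "\<And>x y. y \<in> S \<Longrightarrow> orthogonal (x - p x) y"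
proof -
  obtain B where B: "B \<subseteq> S" "pairwise orthogonal B" "span B = S"
    using orthogonal_basis_subspace[OF assms] by metis
  define p where "p x = (\<Sum>b\<in>B. (b \<bullet> x / (b \<bullet> b)) *\<^sub>R b)" for x
  have "linear p"
    unfolding p_def
    by (rule linearI)
       (simp_all add: inner_add_right add_divide_distrib scaleR_add_left sum.distrib scaleR_sum_right)
  moreover have "p x \<in> S" for x
    unfolding p_def using B(1) assms by (auto intro!: subspace_sum subspace_mul)
  moreover have "orthogonal (x - p x) y" if "y \<in> S" for x y
    using Gram_Schmidt_step[OF B(2), of y x] that B(3) by (simp add: p_def orthogonal_commute)
  ultimately show thesis using that by blast
qed

lemma orthogonal_projection_fixes:
  fixes S :: "'a::euclidean_space set"
  assumes "subspace S" "\<And>x. p x \<in> S" "\<And>x y. y \<in> S \<Longrightarrow> orthogonal (x - p x) y" "y \<in> S"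
  shows "p y = y"
proof -
  have "y - p y \<in> S" using assms by (simp add: subspace_diff)
  then show ?thesis using assms(3) by (metis orthogonal_self right_minus_eq)
qed

lemma orthogonal_projection_self_adjoint:
  fixes S :: "'a::euclidean_space set"
  assumes "\<And>x. p x \<in> S" "\<And>x y. y \<in> S \<Longrightarrow> orthogonal (x - p x) y"
  shows "p x \<bullet> y = x \<bullet> p y"
proof -
  have "p x \<bullet> y = p x \<bullet> p y"
    using assms(2)[of "p x" y] assms(1)
    by (simp add: orthogonal_def inner_diff_left inner_commute[of y] inner_commute[of "p y"])
  also have "\<dots> = x \<bullet> p y"
    using assms(2)[of "p y" x] assms(1) by (simp add: orthogonal_def inner_diff_left)
  finally show ?thesis .
qed

lemma inner_matrix_vector_transpose:
  fixes A :: "real^'n^'m"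
  shows "(A *v x) \<bullet> y = x \<bullet> (transpose A *v y)"
  by (metis dot_lmul_matrix inner_commute transpose_matrix_vector)

lemma symmetric_matrix_if_self_adjoint:
  fixes M :: "real^'n^'n"
  assumes "\<And>x y. (M *v x) \<bullet> y = x \<bullet> (M *v y)"
  shows "transpose M = M"
proof -
  have "adjoint ((*v) M) = (*v) M"
    by (rule adjoint_unique) (use assms in blast)
  then show ?thesis
    by (metis adjoint_matrix matrix_eq)
qed

lemma orthogonal_row_space_iff:
  fixes A :: "real^'n^'m"
  shows "(\<forall>y. orthogonal z (transpose A *v y)) \<longleftrightarrow> A *v z = 0"
  by (metis inner_matrix_vector_transpose inner_eq_zero_iff inner_zero_left orthogonal_def)

lemma matrix_vector_mult_row_space_projection:
  fixes A :: "real^'n^'m"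
  assumes "\<And>x y. y \<in> range ((*v) (transpose A)) \<Longrightarrow> orthogonal (x - q x) y"
  shows "A *v q x = A *v x"
  using assms[of _ x] orthogonal_row_space_iff[of "x - q x" A]
  by (simp add: matrix_vector_mult_diff_distrib)

lemma left_inverse_on_row_space_exists:
  fixes A :: "real^'n^'m"
  defines "C \<equiv> range ((*v) (transpose A))"
  assumes "\<And>x. q x \<in> C" "\<And>x y. y \<in> C \<Longrightarrow> orthogonal (x - q x) y"
  obtains g where "linear g" "\<And>y. g y \<in> C" "\<And>x. g (A *v x) = q x"
proof -
  have "subspace C"
    unfolding C_def by (intro linear_subspace_image matrix_vector_mul_linear subspace_UNIV)
  have "inj_on ((*v) A) C"
  proof (rule inj_onI)
    fix x x' assume "x \<in> C" "x' \<in> C" "A *v x = A *v x'"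
    then have "x - x' \<in> C" "\<forall>y. orthogonal (x - x') (transpose A *v y)"
      using \<open>subspace C\<close> orthogonal_row_space_iff[of "x - x'" A]
      by (simp_all add: subspace_diff matrix_vector_mult_diff_distrib)
    then show "x = x'"
      unfolding C_def by (metis imageE orthogonal_self right_minus_eq)
  qed
  then obtain g where g: "range g \<subseteq> C" "linear g" "\<And>x. x \<in> C \<Longrightarrow> g (A *v x) = x"
    using linear_exists_left_inverse_on[OF matrix_vector_mul_linear \<open>subspace C\<close>] by metis
  moreover have "g (A *v x) = q x" for x
    using g(3) assms(2,3) matrix_vector_mult_row_space_projection[of A q x]
    unfolding C_def by metis
  ultimately show thesis
    using that by blast
qed

definition penrose :: "real^'n^'m \<Rightarrow> real^'m^'n \<Rightarrow> bool" where
  "penrose A X \<longleftrightarrow> A ** X ** A = A \<and> X ** A ** X = X \<and>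
                    transpose (A ** X) = A ** X \<and> transpose (X ** A) = X ** A"

lemma penrose_exists:
  fixes A :: "real^'n^'m"
  shows "\<exists>X. penrose A X"
proof -
  define R where "R = range ((*v) A)"
  define C where "C = range ((*v) (transpose A))"
  have "subspace R" "subspace C"
    unfolding R_def C_def by (intro linear_subspace_image matrix_vector_mul_linear subspace_UNIV)+
  obtain p where p: "linear p" "\<And>x. p x \<in> R" "\<And>x y. y \<in> R \<Longrightarrow> orthogonal (x - p x) y"
    using orthogonal_projection_exists[OF \<open>subspace R\<close>] by blast
  obtain q where q: "linear q" "\<And>x. q x \<in> C" "\<And>x y. y \<in> C \<Longrightarrow> orthogonal (x - q x) y"
    using orthogonal_projection_exists[OF \<open>subspace C\<close>] by blast
  obtain g where g: "linear g" "\<And>y. g y \<in> C" "\<And>x. g (A *v x) = q x"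
    using left_inverse_on_row_space_exists[of q A] q(2,3) unfolding C_def by blast
  \<comment> \<open>X sends y to the preimage in the row space of the projection of y onto the column space.\<close>
  define X where "X = matrix (g \<circ> p)"
  have X: "X *v y = g (p y)" for y
    unfolding X_def using linear_compose[OF p(1) g(1)] by (simp add: matrix_works)
  have X_C: "X *v y \<in> C" for y
    by (simp add: X g(2))
  have A_X: "A *v (X *v y) = p y" for y
  proof -
    obtain x where "p y = A *v x" using p(2) unfolding R_def by blast
    then show ?thesis
      using matrix_vector_mult_row_space_projection[of A q] q(3) by (simp add: X g(3) C_def)
  qed
  have X_A: "X *v (A *v x) = q x" for x
    using orthogonal_projection_fixes[OF \<open>subspace R\<close> p(2,3)] by (simp add: X R_def g(3))
  have "penrose A X"
    unfolding penrose_def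
  proof (intro conjI)
    show "A ** X ** A = A"
      using matrix_vector_mult_row_space_projection[of A q] q(3)
      by (simp add: matrix_eq matrix_vector_mul_assoc[symmetric] X_A C_def)
    show "X ** A ** X = X"
      using orthogonal_projection_fixes[OF \<open>subspace C\<close> q(2,3)]
      by (simp add: matrix_eq matrix_vector_mul_assoc[symmetric] X_A X_C)
    show "transpose (A ** X) = A ** X"
      by (rule symmetric_matrix_if_self_adjoint)
         (simp add: matrix_vector_mul_assoc[symmetric] A_X orthogonal_projection_self_adjoint[OF p(2,3)])
    show "transpose (X ** A) = X ** A"
      by (rule symmetric_matrix_if_self_adjoint)
         (simp add: matrix_vector_mul_assoc[symmetric] X_A orthogonal_projection_self_adjoint[OF q(2,3)])
  qed
  then show ?thesis by blast
qed

lemma penrose_unique: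
  fixes A :: "real^'n^'m"
  assumes "penrose A X" "penrose A Y"
  shows "X = Y"
proof -
  have X: "A ** X ** A = A" "X ** A ** X = X"
      "transpose X ** transpose A = A ** X" "transpose A ** transpose X = X ** A"
    using assms(1) by (auto simp: penrose_def matrix_transpose_mul)
  have Y: "A ** Y ** A = A" "Y ** A ** Y = Y"
      "transpose Y ** transpose A = A ** Y" "transpose A ** transpose Y = Y ** A"
    using assms(2) by (auto simp: penrose_def matrix_transpose_mul)
  have "X = X ** (transpose X ** transpose A)"
    using X(2,3) by (simp add: matrix_mul_assoc)
  also have "\<dots> = X ** (transpose X ** (transpose A ** transpose Y ** transpose A))"
    using arg_cong[OF Y(1), of transpose] by (simp only: matrix_transpose_mul matrix_mul_assoc)
  also have "\<dots> = X ** (transpose X ** transpose A) ** (transpose Y ** transpose A)"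
    by (simp only: matrix_mul_assoc)
  also have "\<dots> = X ** A ** Y"
    by (simp only: X(2,3) Y(3) matrix_mul_assoc)
  finally have X_eq: "X = X ** A ** Y" .
  have "Y = transpose A ** transpose Y ** Y"
    using Y(2,4) by simp
  also have "\<dots> = transpose A ** transpose X ** transpose A ** transpose Y ** Y"
    using arg_cong[OF X(1), of transpose] by (simp only: matrix_transpose_mul matrix_mul_assoc)
  also have "\<dots> = (transpose A ** transpose X) ** (transpose A ** transpose Y) ** Y"
    by (simp only: matrix_mul_assoc)
  also have "\<dots> = X ** A ** (Y ** A ** Y)"
    by (simp only: X(4) Y(4) matrix_mul_assoc)
  also have "\<dots> = X ** A ** Y"
    by (simp only: Y(2))
  finally show ?thesis
    using X_eq by simp
qed

lemma penrose_pinv: "penrose A (pinv A)"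
proof -
  have "\<exists>!X. penrose A X"
    using penrose_exists penrose_unique by blast
  then show ?thesis
    unfolding pinv_def penrose_def[symmetric] by (rule theI')
qed

lemma pinv_eqI: "penrose A X \<Longrightarrow> pinv A = X"
  using penrose_pinv penrose_unique by blast

lemma penrose_transpose:
  assumes "penrose A X"
  shows "penrose (transpose A) (transpose X)"
proof -
  have "transpose A ** transpose X ** transpose A = transpose (A ** X ** A)"
    "transpose X ** transpose A ** transpose X = transpose (X ** A ** X)"
    "transpose A ** transpose X = transpose (X ** A)"
    "transpose X ** transpose A = transpose (A ** X)"
    by (simp_all add: matrix_transpose_mul matrix_mul_assoc)
  with assms show ?thesis
    by (simp add: penrose_def)
qed

lemma pinv_transpose: "pinv (transpose A) = transpose (pinv A)"
  by (intro pinv_eqI penrose_transpose penrose_pinv)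

lemma penrose_transpose_mult_self:
  fixes A :: "real^'n^'m"
  assumes "penrose A X"
  shows "penrose (transpose A ** A) (X ** transpose X)"
proof -
  have AXA: "A ** X ** A = A" and XAX: "X ** A ** X = X"
    and AX: "transpose X ** transpose A = A ** X" and XA: "transpose A ** transpose X = X ** A"
    using assms by (auto simp: penrose_def matrix_transpose_mul)
  have absorb_left: "transpose A ** A ** X = transpose A"
    by (metis AXA AX matrix_mul_assoc matrix_transpose_mul)
  have absorb_right: "X ** transpose X ** transpose A = X"
    by (metis XAX AX matrix_mul_assoc)
  show ?thesis
    unfolding penrose_def
  proof (intro conjI)
    show "transpose A ** A ** (X ** transpose X) ** (transpose A ** A) = transpose A ** A"
      by (metis AXA absorb_right matrix_mul_assoc)
    show "X ** transpose X ** (transpose A ** A) ** (X ** transpose X) = X ** transpose X"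
      by (metis XAX absorb_right matrix_mul_assoc)
    show "transpose (transpose A ** A ** (X ** transpose X)) = transpose A ** A ** (X ** transpose X)"
      by (metis XA absorb_left absorb_right matrix_mul_assoc matrix_transpose_mul)
    show "transpose (X ** transpose X ** (transpose A ** A)) = X ** transpose X ** (transpose A ** A)"
      by (metis XA absorb_right matrix_mul_assoc matrix_transpose_mul)
  qed
qed

lemma pinv_transpose_mult_self: "pinv (transpose A ** A) = pinv A ** transpose (pinv A)"
  by (intro pinv_eqI penrose_transpose_mult_self penrose_pinv)

lemma pinv_mult_transpose_self: "pinv (A ** transpose A) = transpose (pinv A) ** pinv A"
  using pinv_transpose_mult_self[of "transpose A"] by (simp add: pinv_transpose)

lemma transpose_mult_pinv_square_mult:
  fixes A :: "real^'n^'m"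
  shows "transpose A ** (pinv (A ** transpose A) ** pinv (A ** transpose A)) ** A
       = pinv (transpose A ** A)"
proof -
  define P where "P = pinv A"
  have PAP: "P ** A ** P = P" and PA: "transpose A ** transpose P = P ** A"
    using penrose_pinv[of A] by (auto simp: P_def penrose_def matrix_transpose_mul)
  have absorb: "transpose P ** P ** A = transpose P"
    by (metis PAP PA matrix_mul_assoc matrix_transpose_mul transpose_transpose)
  show ?thesis
    unfolding pinv_mult_transpose_self pinv_transpose_mult_self P_def[symmetric]
    by (metis PAP PA absorb matrix_mul_assoc)
qed

lemma diag_pinv_transpose_mult_self:
  fixes A :: "real^'n^'m"
  shows "pinv (transpose A ** A) $ i $ i = (norm (pinv A $ i))\<^sup>2"
  by (simp add: pinv_transpose_mult_self matrix_mult_transpose_dot_row row_def power2_norm_eq_inner)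

lemma diag_eq_inner_ind: "M $ i $ i = ind i \<bullet> (M *v ind i)"
  by (simp add: ind_def matrix_vector_mult_basis inner_axis' column_def)

lemma diag_pinv_transpose_mult_self_eq_quadratic_form:
  fixes A :: "real^'n^'m"
  defines "Q \<equiv> pinv (A ** transpose A) ** pinv (A ** transpose A)"
  shows "pinv (transpose A ** A) $ i $ i = (A *v ind i) \<bullet> (Q *v (A *v ind i))"
proof -
  have "(A *v ind i) \<bullet> (Q *v (A *v ind i)) = ind i \<bullet> ((transpose A ** Q ** A) *v ind i)"
    by (simp add: inner_matrix_vector_transpose matrix_vector_mul_assoc matrix_mul_assoc)
  then show ?thesis
    by (simp add: Q_def transpose_mult_pinv_square_mult diag_eq_inner_ind)
qed

lemma dtilde_mult_ind:
  "dtilde src tgt w *v ind e = sqrt (w e) *\<^sub>R (ind (src e) - ind (tgt e))"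
proof -
  have "wdiag_sqrt w *v ind e = sqrt (w e) *\<^sub>R ind e"
    unfolding ind_def matrix_vector_mult_basis
    by (simp add: vec_eq_iff column_def wdiag_sqrt_def axis_def)
  moreover have "boundary src tgt *v ind e = ind (src e) - ind (tgt e)"
    unfolding ind_def matrix_vector_mult_basis
    by (simp add: vec_eq_iff column_def boundary_def axis_def)
  ultimately show ?thesis
    by (simp add: dtilde_def matrix_vector_mult_scaleR flip: matrix_vector_mul_assoc)
qed

theorem theorem3p1:
  fixes src tgt :: "'e::finite \<Rightarrow> 'v::finite" and w :: "'e \<Rightarrow> real" and e :: 'e
  assumes "\<And>f. src f \<noteq> tgt f"
    and "\<And>f. w f > 0"
  shows "w e * (biharmonic src tgt w (src e) (tgt e))\<^sup>2 = pinv (down_laplacian src tgt w) $ e $ e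
       \<and> pinv (down_laplacian src tgt w) $ e $ e = (norm (pinv (dtilde src tgt w) $ e))\<^sup>2"
proof -
  define D where "D = dtilde src tgt w"
  define d where "d = ind (src e) - ind (tgt e)"
  define Q where "Q = pinv (laplacian src tgt w) ** pinv (laplacian src tgt w)"
  have "w e > 0"
    using assms(2) .
  have "pinv (down_laplacian src tgt w) $ e $ e = (D *v ind e) \<bullet> (Q *v (D *v ind e))"
    unfolding down_laplacian_def Q_def laplacian_def D_def
    by (rule diag_pinv_transpose_mult_self_eq_quadratic_form)
  also have "\<dots> = w e * (d \<bullet> (Q *v d))"
    using \<open>w e > 0\<close> by (simp add: D_def d_def dtilde_mult_ind matrix_vector_mult_scaleR)
  finally have quadratic_form: "pinv (down_laplacian src tgt w) $ e $ e = w e * (d \<bullet> (Q *v d))" .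
  have norm_row: "pinv (down_laplacian src tgt w) $ e $ e = (norm (pinv D $ e))\<^sup>2"
    unfolding down_laplacian_def D_def by (rule diag_pinv_transpose_mult_self)
  then have "d \<bullet> (Q *v d) \<ge> 0"
    using quadratic_form \<open>w e > 0\<close> by (metis zero_le_mult_iff zero_le_power2 not_less)
  then have "(biharmonic src tgt w (src e) (tgt e))\<^sup>2 = d \<bullet> (Q *v d)"
    by (simp add: biharmonic_def Let_def d_def Q_def)
  with quadratic_form norm_row show ?thesis
    by (simp add: D_def)
qed

end
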